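(* $\rhd_{R_{\diamond}}\,=\,\rhd_{\diamond}$ with $R_{\diamond}\,=\,\Bigl\{ \frac{p\, , \, q}{p\diamond q}\,,\, \frac{p\diamond q}{p\, , \, q}\Bigr\}$.
   Context: $\rhd_\diamond$ is the multiple-conclusion (Scottian) logic of the two-valued Nmatrix $\langle\{0,1\},\cdot,\{1\}\rangle$ with one binary connective $\diamond$ (platypus) interpreted by $\diamond(0,0)=\{0\}$, $\diamond(1,1)=\{1\}$, $\diamond(0,1)=\diamond(1,0)=\{0,1\}$: $\Gamma\rhd_\diamond\Delta$ iff every valuation making all of $\Gamma$ equal to $1$ makes some member of $\Delta$ equal to $1$. For a set $R$ of multiple-conclusion rules $\frac{\Gamma}{\Delta}$ (premises read conjunctively, conclusions disjunctively), $\rhd_R$ is the closure of $R$ under overlap, dilution, cut and substitution invariance. *)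

theory Defs
  imports Main
begin

datatype fm = Var nat | Plat fm fm

primrec subst :: "(nat \<Rightarrow> fm) \<Rightarrow> fm \<Rightarrow> fm" where
  "subst \<sigma> (Var n) = \<sigma> n"
| "subst \<sigma> (Plat a b) = Plat (subst \<sigma> a) (subst \<sigma> b)"

text \<open>The two-valued Nmatrix: values bool (True = 1), designated value True,
non-deterministic interpretation of the platypus connective.\<close>
definition plat_interp :: "bool \<Rightarrow> bool \<Rightarrow> bool set" where
  "plat_interp x y = (if x = y then {x} else {False, True})"

definition nvaluation :: "(fm \<Rightarrow> bool) \<Rightarrow> bool" where
  "nvaluation v \<longleftrightarrow> (\<forall>a b. v (Plat a b) \<in> plat_interp (v a) (v b))"

definition plat_cons :: "fm set \<Rightarrow> fm set \<Rightarrow> bool" where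
  "plat_cons \<Gamma> \<Delta> \<longleftrightarrow>
     (\<forall>v. nvaluation v \<longrightarrow> (\<forall>\<gamma>\<in>\<Gamma>. v \<gamma>) \<longrightarrow> (\<exists>\<delta>\<in>\<Delta>. v \<delta>))"

inductive gen_cons :: "(fm set \<times> fm set) set \<Rightarrow> fm set \<Rightarrow> fm set \<Rightarrow> bool"
  for R where
  rule: "(\<Gamma>, \<Delta>) \<in> R \<Longrightarrow> gen_cons R \<Gamma> \<Delta>"
| overlap: "\<Gamma> \<inter> \<Delta> \<noteq> {} \<Longrightarrow> gen_cons R \<Gamma> \<Delta>"
| dilution: "gen_cons R \<Gamma> \<Delta> \<Longrightarrow> \<Gamma> \<subseteq> \<Gamma>' \<Longrightarrow> \<Delta> \<subseteq> \<Delta>' \<Longrightarrow> gen_cons R \<Gamma>' \<Delta>'"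
| cut: "gen_cons R \<Gamma> (insert \<phi> \<Delta>) \<Longrightarrow> gen_cons R (insert \<phi> \<Gamma>) \<Delta> \<Longrightarrow> gen_cons R \<Gamma> \<Delta>"
| substitution: "gen_cons R \<Gamma> \<Delta> \<Longrightarrow> gen_cons R (subst \<sigma> ` \<Gamma>) (subst \<sigma> ` \<Delta>)"

definition R_plat :: "(fm set \<times> fm set) set" where
  "R_plat = {({Var 0, Var 1}, {Plat (Var 0) (Var 1)}),
             ({Plat (Var 0) (Var 1)}, {Var 0, Var 1})}"

end

theory Submission
  imports Defs
begin

text \<open>For completeness, a non-derivable
pair \<open>(\<Gamma>, \<Delta>)\<close> is extended, by Zorn's lemma and the compactness of derivations from
finite rules, to a set \<open>T \<supseteq> \<Gamma>\<close> disjoint from \<open>\<Delta>\<close> that does not derive its own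
complement. Membership in such a \<open>T\<close> respects every derivable rule, and the two rules of
\<open>R_plat\<close> say exactly that a two-valued function obeys the non-deterministic truth table
of the platypus. So membership in \<open>T\<close> is a valuation of the Nmatrix refuting
\<open>\<Gamma> \<rhd> \<Delta>\<close>.\<close>

lemma nvaluation_iff:
  "nvaluation v \<longleftrightarrow> (\<forall>a b. (v a \<and> v b \<longrightarrow> v (Plat a b)) \<and> (v (Plat a b) \<longrightarrow> v a \<or> v b))"
  unfolding nvaluation_def plat_interp_def by (intro iff_allI) auto

lemma nvaluation_comp_subst: "nvaluation v \<Longrightarrow> nvaluation (v \<circ> subst \<sigma>)"
  unfolding nvaluation_def by simp

lemma plat_cons_R_plat: "(\<Gamma>, \<Delta>) \<in> R_plat \<Longrightarrow> plat_cons \<Gamma> \<Delta>"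
  unfolding R_plat_def plat_cons_def nvaluation_iff by auto

lemma plat_cons_subst: "plat_cons \<Gamma> \<Delta> \<Longrightarrow> plat_cons (subst \<sigma> ` \<Gamma>) (subst \<sigma> ` \<Delta>)"
  unfolding plat_cons_def using nvaluation_comp_subst by fastforce

theorem gen_cons_R_plat_sound: "gen_cons R_plat \<Gamma> \<Delta> \<Longrightarrow> plat_cons \<Gamma> \<Delta>"
proof (induction rule: gen_cons.induct)
  case (rule \<Gamma> \<Delta>)
  then show ?case by (rule plat_cons_R_plat)
next
  case (substitution \<Gamma> \<Delta> \<sigma>)
  show ?case using substitution.IH by (rule plat_cons_subst)
qed (unfold plat_cons_def, blast+)

lemma gen_cons_compact:
  assumes finite_rules: "\<forall>(\<Gamma>, \<Delta>) \<in> R. finite \<Gamma> \<and> finite \<Delta>"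
    and "gen_cons R \<Gamma> \<Delta>"
  obtains \<Gamma>\<^sub>0 \<Delta>\<^sub>0 where "finite \<Gamma>\<^sub>0" "finite \<Delta>\<^sub>0" "\<Gamma>\<^sub>0 \<subseteq> \<Gamma>" "\<Delta>\<^sub>0 \<subseteq> \<Delta>" "gen_cons R \<Gamma>\<^sub>0 \<Delta>\<^sub>0"
  using assms(2)
proof (induction arbitrary: thesis rule: gen_cons.induct)
  case (rule \<Gamma> \<Delta>)
  have "finite \<Gamma>" "finite \<Delta>" using finite_rules rule.hyps by auto
  with rule.prems show ?case using gen_cons.rule[OF rule.hyps] by blast
next
  case (overlap \<Gamma> \<Delta>)
  then obtain \<phi> where "\<phi> \<in> \<Gamma>" "\<phi> \<in> \<Delta>" by blast
  moreover have "gen_cons R {\<phi>} {\<phi>}" by (rule gen_cons.overlap) simp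
  ultimately show ?case using overlap.prems[of "{\<phi>}" "{\<phi>}"] by simp
next
  case (dilution \<Gamma> \<Delta> \<Gamma>' \<Delta>')
  obtain \<Gamma>\<^sub>0 \<Delta>\<^sub>0 where "finite \<Gamma>\<^sub>0" "finite \<Delta>\<^sub>0" "\<Gamma>\<^sub>0 \<subseteq> \<Gamma>" "\<Delta>\<^sub>0 \<subseteq> \<Delta>" "gen_cons R \<Gamma>\<^sub>0 \<Delta>\<^sub>0"
    using dilution.IH .
  with dilution.hyps(2,3) show ?case using dilution.prems[of \<Gamma>\<^sub>0 \<Delta>\<^sub>0] by blast
next
  case (cut \<Gamma> \<phi> \<Delta>)
  obtain \<Gamma>\<^sub>1 \<Delta>\<^sub>1 where 1: "finite \<Gamma>\<^sub>1" "finite \<Delta>\<^sub>1" "\<Gamma>\<^sub>1 \<subseteq> \<Gamma>" "\<Delta>\<^sub>1 \<subseteq> insert \<phi> \<Delta>"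
    "gen_cons R \<Gamma>\<^sub>1 \<Delta>\<^sub>1" using cut.IH(1) .
  obtain \<Gamma>\<^sub>2 \<Delta>\<^sub>2 where 2: "finite \<Gamma>\<^sub>2" "finite \<Delta>\<^sub>2" "\<Gamma>\<^sub>2 \<subseteq> insert \<phi> \<Gamma>" "\<Delta>\<^sub>2 \<subseteq> \<Delta>"
    "gen_cons R \<Gamma>\<^sub>2 \<Delta>\<^sub>2" using cut.IH(2) .
  let ?\<Gamma> = "\<Gamma>\<^sub>1 \<union> (\<Gamma>\<^sub>2 - {\<phi>})" and ?\<Delta> = "(\<Delta>\<^sub>1 - {\<phi>}) \<union> \<Delta>\<^sub>2"
  have "gen_cons R ?\<Gamma> (insert \<phi> ?\<Delta>)"
    by (rule gen_cons.dilution[OF 1(5)]) blast+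
  moreover have "gen_cons R (insert \<phi> ?\<Gamma>) ?\<Delta>"
    by (rule gen_cons.dilution[OF 2(5)]) blast+
  ultimately have "gen_cons R ?\<Gamma> ?\<Delta>" by (rule gen_cons.cut)
  moreover have "?\<Gamma> \<subseteq> \<Gamma>" "?\<Delta> \<subseteq> \<Delta>" using 1 2 by blast+
  ultimately show ?case using 1 2 cut.prems[of ?\<Gamma> ?\<Delta>] by simp
next
  case (substitution \<Gamma> \<Delta> \<sigma>)
  obtain \<Gamma>\<^sub>0 \<Delta>\<^sub>0 where "finite \<Gamma>\<^sub>0" "finite \<Delta>\<^sub>0" "\<Gamma>\<^sub>0 \<subseteq> \<Gamma>" "\<Delta>\<^sub>0 \<subseteq> \<Delta>" "gen_cons R \<Gamma>\<^sub>0 \<Delta>\<^sub>0"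
    using substitution.IH .
  then show ?case
    using substitution.prems[of "subst \<sigma> ` \<Gamma>\<^sub>0" "subst \<sigma> ` \<Delta>\<^sub>0"] gen_cons.substitution
    by (simp add: image_mono)
qed

lemma gen_cons_cut_finite:
  assumes "finite A" "gen_cons R \<Gamma> (A \<union> \<Delta>)" "\<And>\<phi>. \<phi> \<in> A \<Longrightarrow> gen_cons R (insert \<phi> \<Gamma>) \<Delta>"
  shows "gen_cons R \<Gamma> \<Delta>"
  using assms
proof (induction A rule: finite_induct)
  case (insert \<phi> A)
  have "gen_cons R (insert \<phi> \<Gamma>) (A \<union> \<Delta>)"
    by (rule gen_cons.dilution[OF insert.prems(2)[of \<phi>]]) auto
  moreover have "gen_cons R \<Gamma> (insert \<phi> (A \<union> \<Delta>))" using insert.prems(1) by simp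
  ultimately have "gen_cons R \<Gamma> (A \<union> \<Delta>)" by (rule gen_cons.cut[rotated])
  with insert.IH insert.prems(2) show ?case by blast
qed simp

definition prime_theory :: "(fm set \<times> fm set) set \<Rightarrow> fm set \<Rightarrow> bool" where
  "prime_theory R T \<longleftrightarrow> \<not> gen_cons R T (- T)"

lemma prime_theory_closed:
  assumes "prime_theory R T" "gen_cons R \<Gamma> \<Delta>" "\<Gamma> \<subseteq> T"
  shows "\<Delta> \<inter> T \<noteq> {}"
  using assms gen_cons.dilution[of R \<Gamma> \<Delta> T "- T"] unfolding prime_theory_def by blast

lemma not_gen_cons_Union_chain:
  assumes finite_rules: "\<forall>(\<Gamma>, \<Delta>) \<in> R. finite \<Gamma> \<and> finite \<Delta>"
    and "C \<noteq> {}" "subset.chain {T. \<not> gen_cons R T \<Delta>} C"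
  shows "\<not> gen_cons R (\<Union>C) \<Delta>"
proof
  assume "gen_cons R (\<Union>C) \<Delta>"
  then obtain \<Gamma>\<^sub>0 \<Delta>\<^sub>0 where "finite \<Gamma>\<^sub>0" "\<Gamma>\<^sub>0 \<subseteq> \<Union>C" "\<Delta>\<^sub>0 \<subseteq> \<Delta>" "gen_cons R \<Gamma>\<^sub>0 \<Delta>\<^sub>0"
    using gen_cons_compact[OF finite_rules] by metis
  moreover obtain T where "T \<in> C" "\<Gamma>\<^sub>0 \<subseteq> T"
    using finite_subset_Union_chain[OF \<open>finite \<Gamma>\<^sub>0\<close> \<open>\<Gamma>\<^sub>0 \<subseteq> \<Union>C\<close> assms(2,3)] .
  ultimately have "gen_cons R T \<Delta>" by (metis gen_cons.dilution)
  moreover have "\<not> gen_cons R T \<Delta>" using \<open>T \<in> C\<close> assms(3) unfolding subset.chain_def by blast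
  ultimately show False by simp
qed

lemma lindenbaum:
  assumes finite_rules: "\<forall>(\<Gamma>, \<Delta>) \<in> R. finite \<Gamma> \<and> finite \<Delta>"
    and "\<not> gen_cons R \<Gamma> \<Delta>"
  obtains T where "\<Gamma> \<subseteq> T" "\<Delta> \<inter> T = {}" "prime_theory R T"
proof -
  let ?A = "{T. \<Gamma> \<subseteq> T \<and> \<not> gen_cons R T \<Delta>}"
  have "\<Union>C \<in> ?A" if chain: "C \<noteq> {}" "subset.chain ?A C" for C
  proof -
    have "subset.chain {T. \<not> gen_cons R T \<Delta>} C" using chain(2) unfolding subset.chain_def by blast
    then have "\<not> gen_cons R (\<Union>C) \<Delta>" using not_gen_cons_Union_chain[OF finite_rules chain(1)] by blast
    moreover have "\<Gamma> \<subseteq> \<Union>C" using chain unfolding subset.chain_def by blast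
    ultimately show ?thesis by simp
  qed
  moreover have "\<Gamma> \<in> ?A" using assms(2) by simp
  ultimately obtain T where T: "\<Gamma> \<subseteq> T" "\<not> gen_cons R T \<Delta>"
    and maximal: "\<And>T'. T' \<in> ?A \<Longrightarrow> T \<subseteq> T' \<Longrightarrow> T' = T"
    using subset_Zorn_nonempty[of ?A] by (metis (no_types, lifting) empty_iff mem_Collect_eq)
  have disjoint: "\<Delta> \<inter> T = {}" using T(2) gen_cons.overlap[of T \<Delta>] by blast
  have "prime_theory R T"
    unfolding prime_theory_def
  proof
    assume "gen_cons R T (- T)"
    then obtain \<Gamma>\<^sub>0 \<Delta>\<^sub>0 where "finite \<Delta>\<^sub>0" "\<Gamma>\<^sub>0 \<subseteq> T" "\<Delta>\<^sub>0 \<subseteq> - T" "gen_cons R \<Gamma>\<^sub>0 \<Delta>\<^sub>0"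
      using gen_cons_compact[OF finite_rules] by metis
    then have "gen_cons R T (\<Delta>\<^sub>0 \<union> \<Delta>)" by (metis gen_cons.dilution sup_ge1)
    moreover have "gen_cons R (insert \<phi> T) \<Delta>" if "\<phi> \<in> \<Delta>\<^sub>0" for \<phi>
    proof (rule ccontr)
      assume "\<not> gen_cons R (insert \<phi> T) \<Delta>"
      then have "insert \<phi> T = T" using maximal[of "insert \<phi> T"] T(1) by auto
      then show False using that \<open>\<Delta>\<^sub>0 \<subseteq> - T\<close> by auto
    qed
    ultimately have "gen_cons R T \<Delta>" using gen_cons_cut_finite[OF \<open>finite \<Delta>\<^sub>0\<close>] by blast
    then show False using T(2) by simp
  qed
  with T(1) disjoint that show thesis by blast
qed

lemma R_plat_finite: "\<forall>(\<Gamma>, \<Delta>) \<in> R_plat. finite \<Gamma> \<and> finite \<Delta>"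
  unfolding R_plat_def by auto

lemma gen_cons_R_plat_instances:
  "gen_cons R_plat {a, b} {Plat a b}" "gen_cons R_plat {Plat a b} {a, b}"
proof -
  let ?\<sigma> = "\<lambda>n. if n = 0 then a else b"
  have "gen_cons R_plat {Var 0, Var 1} {Plat (Var 0) (Var 1)}"
    "gen_cons R_plat {Plat (Var 0) (Var 1)} {Var 0, Var 1}"
    by (auto intro: gen_cons.rule simp: R_plat_def)
  from this[THEN gen_cons.substitution[where \<sigma> = ?\<sigma>]]
  show "gen_cons R_plat {a, b} {Plat a b}" "gen_cons R_plat {Plat a b} {a, b}"
    by simp_all
qed

lemma prime_theory_R_plat_nvaluation:
  assumes "prime_theory R_plat T"
  shows "nvaluation (\<lambda>\<phi>. \<phi> \<in> T)"
  unfolding nvaluation_iff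
  using prime_theory_closed[OF assms gen_cons_R_plat_instances(1)]
    prime_theory_closed[OF assms gen_cons_R_plat_instances(2)]
  by blast

theorem gen_cons_R_plat_complete:
  assumes "plat_cons \<Gamma> \<Delta>"
  shows "gen_cons R_plat \<Gamma> \<Delta>"
proof (rule ccontr)
  assume "\<not> gen_cons R_plat \<Gamma> \<Delta>"
  then obtain T where "\<Gamma> \<subseteq> T" "\<Delta> \<inter> T = {}" "prime_theory R_plat T"
    using lindenbaum[OF R_plat_finite] by metis
  then show False
    using assms prime_theory_R_plat_nvaluation unfolding plat_cons_def by blast
qed

theorem theorem3:
  shows "gen_cons R_plat = plat_cons"
  using gen_cons_R_plat_sound gen_cons_R_plat_complete by (intro ext iffI)

end
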